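(* Let the (random) sets $S_{\rm tr},S_1,\dots,S_m$ be the output of the Randomized meta-Greedy algorithm (defined in the context), and suppose every $f_i$ is monotone and submodular. Let $b=\max\{\frac{1}{k-l},\frac1l\}$ and $c=3\sqrt{b\log(1/b)}$. Then $$\mathbb{E}\Bigl[\sum_{i=1}^m f_i(S_{\rm tr}\cup S_i)\Bigr]\;\ge\;\bigl(1-b-\exp(-1+c)\bigr)\,\mathrm{OPT}.$$
   Context: $V$ is a finite ground set with $|V|=n$; $k,l$ are integers with $1\le l<k\le n$. For $i=1,\dots,m$, $f_i:2^V\to\mathbb{R}_{\ge 0}$ is a set function; monotone means $A\subseteq B\Rightarrow f_i(A)\le f_i(B)$, submodular means $f_i(A)+f_i(B)\ge f_i(A\cup B)+f_i(A\cap B)$. Define $$\mathrm{OPT}=\max_{S_{\rm tr}\subseteq V,\,|S_{\rm tr}|\le l}\;\sum_{i=1}^m\;\max_{S_i\subseteq V,\,|S_i|\le k-l} f_i(S_{\rm tr}\cup S_i).$$ Randomized meta-Greedy: start with $S_{\rm tr}=S_1=\dots=S_m=\emptyset$. While $|S_{\rm tr}|<l$ and $|S_i|<k-l$ (all $S_i$ have equal size throughout): compute $e_i^*\in\arg\max_{e\in V}[f_i(S_{\rm tr}\cup S_i\cup\{e\})-f_i(S_{\rm tr}\cup S_i)]$ for each $i$ and $e_{\rm tr}^*\in\arg\max_{e\in V}\sum_{i=1}^m[f_i(S_{\rm tr}\cup S_i\cup\{e\})-f_i(S_{\rm tr}\cup S_i)]$; then, independently of the past, with probability $l/k$ set $S_{\rm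 tr}\leftarrow S_{\rm tr}\cup\{e^*_{\rm tr}\}$, and otherwise (probability $(k-l)/k$) set $S_i\leftarrow S_i\cup\{e_i^*\}$ for all $i=1,\dots,m$. After the loop, whichever of $S_{\rm tr}$ (size limit $l$) or the $S_i$'s (size limit $k-l$) has not reached its limit is filled up greedily with the same greedy rules until the limit is reached. Ties are broken arbitrarily; $\log$ is the natural logarithm. *)

theory Defs
  imports "HOL-Probability.Probability"
begin

text \<open>State of the algorithm: (S_tr, S, a, b) where S i is the set S_i, a is the number of
  additions made to S_tr so far and b the (common) number of additions made to every S_i.\<close>
type_synonym 'a mg_state = "'a set \<times> (nat \<Rightarrow> 'a set) \<times> nat \<times> nat"

definition mg_gain :: "('a set \<Rightarrow> real) \<Rightarrow> 'a set \<Rightarrow> 'a \<Rightarrow> real" where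
  "mg_gain g A e = g (A \<union> {e}) - g A"

definition add_tr :: "('a mg_state \<Rightarrow> 'a) \<Rightarrow> 'a mg_state \<Rightarrow> 'a mg_state" where
  "add_tr etr st = (case st of (T, S, a, b) \<Rightarrow> (T \<union> {etr st}, S, Suc a, b))"

definition add_S :: "(nat \<Rightarrow> 'a mg_state \<Rightarrow> 'a) \<Rightarrow> 'a mg_state \<Rightarrow> 'a mg_state" where
  "add_S ei st = (case st of (T, S, a, b) \<Rightarrow> (T, (\<lambda>i. S i \<union> {ei i st}), a, Suc b))"

text \<open>The greedy choices
  (with arbitrary tie-breaking, possibly depending on the current state) are given by the
  choice functions etr and ei.\<close>
fun mg_run :: "nat \<Rightarrow> nat \<Rightarrow> ('a mg_state \<Rightarrow> 'a) \<Rightarrow> (nat \<Rightarrow> 'a mg_state \<Rightarrow> 'a)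
    \<Rightarrow> nat \<Rightarrow> 'a mg_state \<Rightarrow> 'a mg_state pmf" where
  "mg_run k l etr ei 0 st = return_pmf st"
| "mg_run k l etr ei (Suc n) st =
     (case st of (T, S, a, b) \<Rightarrow>
        if a < l \<and> b < k - l then
          bernoulli_pmf (real l / real k) \<bind>
            (\<lambda>c. mg_run k l etr ei n (if c then add_tr etr st else add_S ei st))
        else if a < l then mg_run k l etr ei n (add_tr etr st)
        else if b < k - l then mg_run k l etr ei n (add_S ei st)
        else return_pmf st)"

definition meta_greedy :: "nat \<Rightarrow> nat \<Rightarrow> ('a mg_state \<Rightarrow> 'a) \<Rightarrow> (nat \<Rightarrow> 'a mg_state \<Rightarrow> 'a)
    \<Rightarrow> 'a mg_state pmf" where
  "meta_greedy k l etr ei = mg_run k l etr ei k ({}, (\<lambda>i. {}), 0, 0)"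

definition OPT :: "'a set \<Rightarrow> nat \<Rightarrow> (nat \<Rightarrow> 'a set \<Rightarrow> real) \<Rightarrow> nat \<Rightarrow> nat \<Rightarrow> real" where
  "OPT V m f k l =
     Max ((\<lambda>T. \<Sum>i=1..m. Max ((\<lambda>S. f i (T \<union> S)) ` {S. S \<subseteq> V \<and> card S \<le> k - l}))
          ` {T. T \<subseteq> V \<and> card T \<le> l})"

definition monotone_sf :: "'a set \<Rightarrow> ('a set \<Rightarrow> real) \<Rightarrow> bool" where
  "monotone_sf V g \<longleftrightarrow> (\<forall>A B. A \<subseteq> B \<and> B \<subseteq> V \<longrightarrow> g A \<le> g B)"

definition submodular_sf :: "'a set \<Rightarrow> ('a set \<Rightarrow> real) \<Rightarrow> bool" where
  "submodular_sf V g \<longleftrightarrow>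
     (\<forall>A B. A \<subseteq> V \<and> B \<subseteq> V \<longrightarrow> g A + g B \<ge> g (A \<union> B) + g (A \<inter> B))"

end

theory Submission
  imports Defs
begin

text \<open>Track the gap D = OPT - F between the optimum and the current value F. Monotonicity and
  submodularity give D \<le> l x + (k - l) y, where x \<le> y are the greedy gains of adding to S_tr and
  to all the S_i. Hence one random step shrinks the expected gap by at most the factor of a
  two-variable recurrence in the remaining budgets, and E[F] \<ge> (1 - A) OPT with A the value of
  the recurrence at (l, k - l). The recurrence is dominated by (1 - 1/k)^(u + v) \<Psi>(u, v) for every
  potential \<Psi> that dominates its own average over a random step and is non-increasing in v.
  The potential \<Psi>(u, v) = \<rho>^d + (\<rho>/x)^d x^u y^v with \<rho> = k/(k - 1), d = c (k - 1), x = 1 + s,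
  y = x/(1 + t), t = d/(2k) and s = (k - l) t/k gives A \<le> exp(-1 + c) + b: the constant term
  produces the exponential, and the choice of c makes the other one at most
  exp(-(k - l) d^2/(4k^2)) \<le> b. The guarantee is positive only if min l (k - l) \<ge> 4 and c < 1,
  and otherwise there is nothing to prove.\<close>

section \<open>Monotone submodular set functions\<close>

lemma monotone_sfD: "monotone_sf V g \<Longrightarrow> A \<subseteq> B \<Longrightarrow> B \<subseteq> V \<Longrightarrow> g A \<le> g B"
  unfolding monotone_sf_def by blast

lemma submodular_sfD:
  "submodular_sf V g \<Longrightarrow> A \<subseteq> V \<Longrightarrow> B \<subseteq> V \<Longrightarrow> g (A \<union> B) + g (A \<inter> B) \<le> g A + g B"
  unfolding submodular_sf_def by blast

lemma mg_gain_nonneg: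
  assumes "monotone_sf V g" "X \<subseteq> V" "e \<in> V"
  shows "0 \<le> mg_gain g X e"
  using monotone_sfD[OF assms(1), of X "X \<union> {e}"] assms(2,3) unfolding mg_gain_def by auto

lemma submodular_sf_le_sum_mg_gain:
  assumes "monotone_sf V g" "submodular_sf V g" "X \<subseteq> V" "finite Y" "Y \<subseteq> V"
  shows "g (X \<union> Y) \<le> g X + (\<Sum>e\<in>Y. mg_gain g X e)"
  using assms(4,5)
proof (induction Y rule: finite_induct)
  case empty
  then show ?case by simp
next
  case (insert e Y)
  have V: "X \<union> Y \<subseteq> V" "X \<union> {e} \<subseteq> V"
    using insert.prems assms(3) by auto
  have "(X \<union> Y) \<union> (X \<union> {e}) = X \<union> insert e Y"
    by auto
  then have "g (X \<union> insert e Y) + g ((X \<union> Y) \<inter> (X \<union> {e})) \<le> g (X \<union> Y) + g (X \<union> {e})"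
    using submodular_sfD[OF assms(2) V] by simp
  moreover have "g X \<le> g ((X \<union> Y) \<inter> (X \<union> {e}))"
    using V by (intro monotone_sfD[OF assms(1)]) auto
  ultimately have "g (X \<union> insert e Y) \<le> g (X \<union> Y) + mg_gain g X e"
    unfolding mg_gain_def by linarith
  with insert show ?case
    by simp
qed

lemma monotone_submodular_union_le:
  assumes "monotone_sf V g" "submodular_sf V g" "finite V" "X \<subseteq> V" "A \<subseteq> V" "B \<subseteq> V"
  shows "g (A \<union> B) \<le> g X + (\<Sum>e\<in>A. mg_gain g X e) + (\<Sum>e\<in>B. mg_gain g X e)"
proof -
  have fin: "finite A" "finite B"
    using assms(3,5,6) finite_subset by auto
  have "g (A \<union> B) \<le> g (X \<union> (A \<union> B))"
    using assms(4-6) by (intro monotone_sfD[OF assms(1)]) auto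
  also have "\<dots> \<le> g X + (\<Sum>e\<in>A \<union> B. mg_gain g X e)"
    using assms(1,2,4-6) fin by (intro submodular_sf_le_sum_mg_gain) auto
  also have "(\<Sum>e\<in>A \<union> B. mg_gain g X e) \<le> (\<Sum>e\<in>A. mg_gain g X e) + (\<Sum>e\<in>B. mg_gain g X e)"
  proof -
    have "(\<Sum>e\<in>A \<union> B. mg_gain g X e) + (\<Sum>e\<in>A \<inter> B. mg_gain g X e)
        = (\<Sum>e\<in>A. mg_gain g X e) + (\<Sum>e\<in>B. mg_gain g X e)"
      using fin by (rule sum.union_inter)
    moreover have "0 \<le> (\<Sum>e\<in>A \<inter> B. mg_gain g X e)"
      using assms(1,4,5) by (intro sum_nonneg mg_gain_nonneg) auto
    ultimately show ?thesis
      by linarith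
  qed
  finally show ?thesis
    by linarith
qed

section \<open>The gap recurrence\<close>

text \<open>Upper bound on the ratio between the expected final gap and the current gap, when \<open>u\<close>
  elements are still to be added to \<open>S_tr\<close> and \<open>v\<close> to every \<open>S_i\<close>. The two arguments of the
  \<open>max\<close> come from the case split on which of the two successor factors is larger in
  \<open>gap_step_le\<close>.\<close>

function gap_factor :: "nat \<Rightarrow> nat \<Rightarrow> nat \<Rightarrow> nat \<Rightarrow> real" where
  "gap_factor k l u 0 = 1"
| "gap_factor k l 0 (Suc v) = (1 - 1 / real k) ^ Suc v"
| "gap_factor k l (Suc u) (Suc v) =
     max ((1 - 1 / real k) * (real l / real k * gap_factor k l u (Suc v)
                               + (1 - real l / real k) * gap_factor k l (Suc u) v))
         (real l / real k * gap_factor k l u (Suc v)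
            + (1 - real l / real k - 1 / real k) * gap_factor k l (Suc u) v)"
  by pat_completeness auto
termination
  by (relation "Wellfounded.measure (\<lambda>(k, l, u, v). u + v)") auto

lemma gap_factor_zero_left: "gap_factor k l 0 v = (1 - 1 / real k) ^ v"
  by (cases v) simp_all

lemma gap_factor_bounds:
  assumes "l < k"
  shows "0 \<le> gap_factor k l u v \<and> gap_factor k l u v \<le> 1"
  using assms
proof (induction k l u v rule: gap_factor.induct)
  case (2 k l v)
  have "0 \<le> 1 - 1 / real k" "1 - 1 / real k \<le> 1"
    using "2.prems" by auto
  then show ?case
    by (simp del: power_Suc add: power_le_one)
next
  case (3 k l u v)
  define p where "p = real l / real k"
  define A1 where "A1 = gap_factor k l u (Suc v)"
  define A2 where "A2 = gap_factor k l (Suc u) v"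
  have A: "0 \<le> A1" "A1 \<le> 1" "0 \<le> A2" "A2 \<le> 1"
    using "3.IH" "3.prems" unfolding A1_def A2_def by auto
  have p: "0 \<le> p" "p \<le> 1" "1 / real k \<le> 1 - p" "1 / real k \<le> 1"
    using "3.prems" by (auto simp: p_def field_simps)
  have "0 \<le> p * A1 + (1 - p) * A2" "p * A1 + (1 - p) * A2 \<le> 1"
    using A p by (auto intro!: add_nonneg_nonneg mult_nonneg_nonneg convex_bound_le)
  then have first: "0 \<le> (1 - 1 / real k) * (p * A1 + (1 - p) * A2)"
      "(1 - 1 / real k) * (p * A1 + (1 - p) * A2) \<le> 1"
    using p by (simp_all add: mult_le_one)
  have "p * A1 + (1 - p - 1 / real k) * A2 \<le> p + (1 - p - 1 / real k)"
    using A p by (intro add_mono mult_left_le) auto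
  moreover have "0 \<le> 1 / real k"
    by simp
  ultimately have second: "0 \<le> p * A1 + (1 - p - 1 / real k) * A2"
      "p * A1 + (1 - p - 1 / real k) * A2 \<le> 1"
    using A p by (simp, linarith)
  show ?case
    unfolding gap_factor.simps p_def[symmetric] A1_def[symmetric] A2_def[symmetric]
    using first second by (simp add: le_max_iff_disj)
qed simp

text \<open>One random step: with probability \<open>p = l/k\<close> the gap \<open>D\<close> drops by \<open>x\<close>, otherwise by \<open>y\<close>,
  and \<open>e = 1/k\<close>.\<close>

lemma gap_step_le:
  fixes p e A1 A2 D x y :: real
  assumes "0 \<le> p" "p \<le> 1" "0 \<le> A1" "0 \<le> A2" "0 \<le> D" "0 \<le> x" "x \<le> y"
    and "e * D \<le> p * x + (1 - p) * y"
  shows "p * A1 * (D - x) + (1 - p) * A2 * (D - y)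
    \<le> max ((1 - e) * (p * A1 + (1 - p) * A2)) (p * A1 + (1 - p - e) * A2) * D"
proof -
  have "p * x + (1 - p) * y \<le> y"
    using convex_bound_le[of x y y p "1 - p"] assms(1,2,7) by simp
  then have eD_le_y: "e * D \<le> y"
    using assms(8) by linarith
  have lhs: "p * A1 * (D - x) + (1 - p) * A2 * (D - y)
      = (p * A1 + (1 - p) * A2) * D - (p * A1 * x + (1 - p) * A2 * y)"
    by (simp add: algebra_simps)
  show ?thesis
  proof (cases "A1 \<le> A2")
    case True
    have "A1 * (e * D) \<le> A1 * (p * x + (1 - p) * y)"
      using assms(8,3) by (rule mult_left_mono)
    moreover have "(A2 - A1) * (1 - p) * (e * D) \<le> (A2 - A1) * (1 - p) * y"
      using eD_le_y True assms(2) by (intro mult_left_mono) auto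
    moreover have "A1 * (e * D) + (A2 - A1) * (1 - p) * (e * D) = e * (p * A1 + (1 - p) * A2) * D"
        "A1 * (p * x + (1 - p) * y) + (A2 - A1) * (1 - p) * y = p * A1 * x + (1 - p) * A2 * y"
        "(1 - e) * (p * A1 + (1 - p) * A2) * D = (p * A1 + (1 - p) * A2) * D - e * (p * A1 + (1 - p) * A2) * D"
      by (simp_all add: algebra_simps)
    ultimately have "p * A1 * (D - x) + (1 - p) * A2 * (D - y) \<le> (1 - e) * (p * A1 + (1 - p) * A2) * D"
      unfolding lhs by linarith
    also have "\<dots> \<le> max ((1 - e) * (p * A1 + (1 - p) * A2)) (p * A1 + (1 - p - e) * A2) * D"
      using assms(5) by (intro mult_right_mono) simp_all
    finally show ?thesis .
  next
    case False
    have "A2 * (e * D) \<le> A2 * (p * x + (1 - p) * y)"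
      using assms(8,4) by (rule mult_left_mono)
    moreover have "p * A2 * x \<le> p * A1 * x"
      using False assms(1,6) by (intro mult_right_mono mult_left_mono) auto
    moreover have "A2 * (p * x + (1 - p) * y) = p * A2 * x + (1 - p) * A2 * y"
        "(p * A1 + (1 - p - e) * A2) * D = (p * A1 + (1 - p) * A2) * D - A2 * (e * D)"
      by (simp_all add: algebra_simps)
    ultimately have "p * A1 * (D - x) + (1 - p) * A2 * (D - y) \<le> (p * A1 + (1 - p - e) * A2) * D"
      unfolding lhs by linarith
    also have "\<dots> \<le> max ((1 - e) * (p * A1 + (1 - p) * A2)) (p * A1 + (1 - p - e) * A2) * D"
      using assms(5) by (intro mult_right_mono) simp_all
    finally show ?thesis .
  qed
qed

section \<open>Bounding the recurrence by a potential\<close>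

lemma recurrence_step_le_potential:
  fixes p e R A1 A2 S0 S1 S2 :: real
  assumes "0 \<le> p" "0 \<le> e" "e \<le> 1 - p" "0 \<le> R" "A1 \<le> R * S1" "A2 \<le> R * S2"
    and avg: "p * S1 + (1 - p) * S2 \<le> S0" and anti: "S0 \<le> S2"
  shows "max ((1 - e) * (p * A1 + (1 - p) * A2)) (p * A1 + (1 - p - e) * A2) \<le> (1 - e) * (R * S0)"
proof -
  have "p * A1 + (1 - p) * A2 \<le> p * (R * S1) + (1 - p) * (R * S2)"
    using assms(1-3,5,6) by (intro add_mono mult_left_mono) auto
  also have "\<dots> \<le> R * S0"
    using avg assms(4) mult_left_mono[OF avg assms(4)] by (simp add: algebra_simps)
  finally have "(1 - e) * (p * A1 + (1 - p) * A2) \<le> (1 - e) * (R * S0)"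
    using assms(1,3) by (intro mult_left_mono) auto
  moreover have "p * A1 + (1 - p - e) * A2 \<le> p * (R * S1) + (1 - p - e) * (R * S2)"
    using assms(1,3,5,6) by (intro add_mono mult_left_mono) auto
  moreover have "p * (R * S1) + (1 - p - e) * (R * S2) \<le> (1 - e) * (R * S0)"
  proof -
    have "p * S1 + (1 - p - e) * S2 \<le> (1 - e) * S0"
      using avg anti mult_left_mono[OF anti assms(2)] by (simp add: algebra_simps)
    from mult_left_mono[OF this assms(4)] show ?thesis
      by (simp add: algebra_simps)
  qed
  ultimately show ?thesis
    by simp
qed

lemma gap_factor_le_potential:
  fixes Psi :: "nat \<Rightarrow> nat \<Rightarrow> real"
  assumes "l < k"
    and "\<And>u. 1 \<le> (1 - 1 / real k) ^ u * Psi u 0"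
    and "\<And>v. 1 \<le> Psi 0 v"
    and "\<And>u v. real l / real k * Psi u (Suc v) + (1 - real l / real k) * Psi (Suc u) v
                 \<le> Psi (Suc u) (Suc v)"
    and "\<And>u v. Psi (Suc u) (Suc v) \<le> Psi (Suc u) v"
  shows "gap_factor k l u v \<le> (1 - 1 / real k) ^ (u + v) * Psi u v"
  using assms
proof (induction k l u v rule: gap_factor.induct)
  case (1 k l u)
  then show ?case by simp
next
  case (2 k l v)
  have "0 \<le> (1 - 1 / real k) ^ Suc v"
    using "2.prems"(1) by simp
  then show ?case
    using "2.prems"(3)[of "Suc v"] mult_left_mono[of 1 "Psi 0 (Suc v)"] by simp
next
  case (3 k l u v)
  define R where "R = (1 - 1 / real k) ^ Suc (u + v)"
  have "max ((1 - 1 / real k) * (real l / real k * gap_factor k l u (Suc v)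
                                  + (1 - real l / real k) * gap_factor k l (Suc u) v))
            (real l / real k * gap_factor k l u (Suc v)
               + (1 - real l / real k - 1 / real k) * gap_factor k l (Suc u) v)
      \<le> (1 - 1 / real k) * (R * Psi (Suc u) (Suc v))"
  proof (rule recurrence_step_le_potential)
    show "gap_factor k l u (Suc v) \<le> R * Psi u (Suc v)"
      using "3.IH"(1)[OF "3.prems"] by (simp add: R_def)
    show "gap_factor k l (Suc u) v \<le> R * Psi (Suc u) v"
      using "3.IH"(2)[OF "3.prems"] by (simp add: R_def)
    show "0 \<le> R"
      using "3.prems"(1) by (simp add: R_def)
  qed (use "3.prems" in \<open>auto simp: field_simps\<close>)
  then show ?case
    by (simp add: R_def)
qed

lemma power_le_powr_add_powr_mult_power:
  fixes \<rho> x d :: real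
  assumes "1 \<le> \<rho>" "\<rho> \<le> x" "0 \<le> d"
  shows "\<rho> ^ u \<le> \<rho> powr d + (\<rho> / x) powr d * x ^ u"
proof (cases "real u \<le> d")
  case True
  then have "\<rho> ^ u \<le> \<rho> powr d"
    using assms(1) by (simp add: powr_realpow[symmetric] powr_mono)
  moreover have "0 \<le> (\<rho> / x) powr d * x ^ u"
    using assms(1,2) by simp
  ultimately show ?thesis
    by linarith
next
  case False
  have "0 < \<rho> / x" "\<rho> / x \<le> 1"
    using assms(1,2) by auto
  then have "(\<rho> / x) ^ u \<le> (\<rho> / x) powr d"
    using False by (simp add: powr_realpow[symmetric] powr_mono')
  then have "\<rho> ^ u \<le> (\<rho> / x) powr d * x ^ u"
    using assms(1,2) by (simp add: power_divide divide_le_eq)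
  then show ?thesis
    using powr_ge_zero[of \<rho> d] by linarith
qed

lemma gap_factor_le_power_potential:
  fixes k l u v :: nat and d x y :: real
  defines "\<rho> \<equiv> real k / (real k - 1)"
  assumes lk: "l < k" and k: "1 < k" and d: "0 \<le> d" and \<rho>x: "\<rho> \<le> x" and y: "0 < y" "y \<le> 1"
    and xy: "real l / real k * y + (1 - real l / real k) * x = x * y"
  shows "gap_factor k l u v
    \<le> (1 - 1 / real k) ^ (u + v) * (\<rho> powr d + (\<rho> / x) powr d * x ^ u * y ^ v)"
proof (rule gap_factor_le_potential[OF lk])
  have \<rho>: "1 \<le> \<rho>" "(1 - 1 / real k) * \<rho> = 1"
    using k by (auto simp: \<rho>_def field_simps)
  then have x: "0 < x"
    using \<rho>x by linarith
  show "1 \<le> (1 - 1 / real k) ^ u * (\<rho> powr d + (\<rho> / x) powr d * x ^ u * y ^ 0)" for u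
  proof -
    have "(1 - 1 / real k) ^ u * \<rho> ^ u \<le> (1 - 1 / real k) ^ u * (\<rho> powr d + (\<rho> / x) powr d * x ^ u)"
      using k power_le_powr_add_powr_mult_power[OF \<rho>(1) \<rho>x d] by (intro mult_left_mono) simp_all
    moreover have "(1 - 1 / real k) ^ u * \<rho> ^ u = 1"
      using \<rho>(2) by (simp add: power_mult_distrib[symmetric])
    ultimately show ?thesis
      by simp
  qed
  show "1 \<le> \<rho> powr d + (\<rho> / x) powr d * x ^ 0 * y ^ v" for v
    using ge_one_powr_ge_zero[OF \<rho>(1) d] y(1) powr_ge_zero[of "\<rho> / x" d]
    by (simp add: add_increasing2)
  show "real l / real k * (\<rho> powr d + (\<rho> / x) powr d * x ^ u * y ^ Suc v)
      + (1 - real l / real k) * (\<rho> powr d + (\<rho> / x) powr d * x ^ Suc u * y ^ v)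
      \<le> \<rho> powr d + (\<rho> / x) powr d * x ^ Suc u * y ^ Suc v" for u v
  proof -
    have "real l / real k * (\<rho> powr d + (\<rho> / x) powr d * x ^ u * y ^ Suc v)
        + (1 - real l / real k) * (\<rho> powr d + (\<rho> / x) powr d * x ^ Suc u * y ^ v)
        = \<rho> powr d + (\<rho> / x) powr d * x ^ u * y ^ v
            * (real l / real k * y + (1 - real l / real k) * x)"
      by (simp add: algebra_simps)
    then show ?thesis
      unfolding xy by (simp add: algebra_simps)
  qed
  show "\<rho> powr d + (\<rho> / x) powr d * x ^ Suc u * y ^ Suc v
      \<le> \<rho> powr d + (\<rho> / x) powr d * x ^ Suc u * y ^ v" for u v
  proof -
    have "y ^ Suc v \<le> y ^ v"
      using y by (simp add: mult_left_le_one_le)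
    then show ?thesis
      using x by (simp add: mult_left_mono)
  qed
qed

lemma one_minus_inverse_power_mult_powr_le:
  fixes k :: nat and d :: real
  assumes "1 < k" "0 \<le> d"
  shows "(1 - 1 / real k) ^ k * (real k / (real k - 1)) powr d \<le> exp (-1 + d / (real k - 1))"
proof -
  have "(1 - 1 / real k) ^ k \<le> exp (-1)"
    using exp_ge_one_minus_x_over_n_power_n[of 1 k] assms(1) by simp
  moreover have "(real k / (real k - 1)) powr d \<le> exp (d / (real k - 1))"
  proof -
    have "ln (real k / (real k - 1)) \<le> real k / (real k - 1) - 1"
      using assms(1) by (intro ln_le_minus_one) simp
    also have "\<dots> = 1 / (real k - 1)"
      using assms(1) by (simp add: field_simps)
    finally have "d * ln (real k / (real k - 1)) \<le> d / (real k - 1)"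
      using mult_left_mono[OF _ assms(2)] by fastforce
    then show ?thesis
      using assms(1) by (simp add: powr_def)
  qed
  ultimately have "(1 - 1 / real k) ^ k * (real k / (real k - 1)) powr d \<le> exp (-1) * exp (d / (real k - 1))"
    using assms(1) by (intro mult_mono) simp_all
  then show ?thesis
    by (simp only: exp_add)
qed

lemma potential_tail_le:
  fixes k l :: nat and d :: real
  defines "t \<equiv> d / (2 * real k)"
  defines "s \<equiv> real (k - l) / real k * t"
  assumes "l \<le> k" "0 \<le> d" "d \<le> real k"
  shows "(1 + s) ^ l * ((1 + s) / (1 + t)) ^ (k - l) / (1 + s) powr d
    \<le> exp (- (real (k - l) * d\<^sup>2 / (4 * real k ^ 2)))" (is "?X \<le> _")
proof (cases "k = 0")
  case True
  then show ?thesis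
    using assms by (simp add: s_def t_def)
next
  case False
  define N where "N = real (k - l)"
  have N: "0 \<le> N" "real k = real l + N"
    using assms(3) by (simp_all add: N_def of_nat_diff)
  have K: "0 < real k"
    using False by simp
  have t: "0 \<le> t" "t \<le> 1"
    using assms(4,5) K by (auto simp: t_def)
  have q: "0 \<le> N / real k" "N / real k \<le> 1"
    using N K by simp_all
  have s: "0 \<le> s" "s \<le> t"
    unfolding s_def N_def[symmetric]
    using mult_nonneg_nonneg[OF q(1) t(1)] mult_left_le_one_le[OF t(1) q] by simp_all
  have "ln ?X = (real k - d) * ln (1 + s) - N * ln (1 + t)"
    using s t by (simp add: ln_div ln_mult ln_realpow N(2) N_def[symmetric] algebra_simps)
  also have "\<dots> \<le> (real k - d) * s - N * (t - t\<^sup>2)"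
  proof -
    have "(real k - d) * ln (1 + s) \<le> (real k - d) * s"
      using s assms(5) ln_le_minus_one[of "1 + s"] by (intro mult_left_mono) auto
    moreover have "N * (t - t\<^sup>2) \<le> N * ln (1 + t)"
      using t ln_one_plus_pos_lower_bound[OF t] by (intro mult_left_mono) (simp_all add: N(1))
    ultimately show ?thesis
      by linarith
  qed
  also have "\<dots> = - (N * d\<^sup>2 / (4 * real k ^ 2))"
    using K by (simp add: s_def t_def N_def[symmetric] power2_eq_square field_simps)
  finally have ln_X: "ln ?X \<le> - (real (k - l) * d\<^sup>2 / (4 * real k ^ 2))"
    by (simp add: N_def)
  have "?X = exp (ln ?X)"
    using s t by simp
  also have "\<dots> \<le> exp (- (real (k - l) * d\<^sup>2 / (4 * real k ^ 2)))"
    using ln_X by simp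
  finally show ?thesis .
qed

lemma bc_parameter_bounds:
  fixes b c N :: real
  assumes "0 < N" "1 / N \<le> b" "b \<le> 1 / 4" "c = 3 * sqrt (b * ln (1 / b))"
  shows "0 < b" "4 \<le> N" "0 \<le> c" "ln (1 / b) \<le> N * c\<^sup>2 / 9" "6 \<le> N * c"
proof -
  show b: "0 < b"
    using assms(1,2) by (smt (verit) divide_pos_pos)
  have bN: "1 \<le> b * N"
    using assms(1,2) by (simp add: divide_le_eq)
  moreover have "b * N \<le> 1 / 4 * N"
    using assms(1,3) by (intro mult_right_mono) auto
  ultimately show N: "4 \<le> N"
    by linarith
  have "ln 4 \<le> ln (1 / b)"
    using assms(3) b by (simp add: le_divide_eq)
  moreover have "ln (4 :: real) = 2 * ln 2"
    using ln_realpow[of 2 2] by simp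
  ultimately have ln: "1 \<le> ln (1 / b)"
    using ln2_ge_two_thirds by linarith
  have bl: "0 \<le> b * ln (1 / b)"
    using b ln by (intro mult_nonneg_nonneg) linarith+
  then show "0 \<le> c"
    using assms(4) by simp
  from bl have c2: "c\<^sup>2 = 9 * (b * ln (1 / b))"
    by (simp add: assms(4) power_mult_distrib)
  have "ln (1 / b) \<le> (b * N) * ln (1 / b)"
    using bN ln by simp
  then show "ln (1 / b) \<le> N * c\<^sup>2 / 9"
    by (simp add: c2 algebra_simps)
  have "1 * 1 \<le> b * N * ln (1 / b)"
    using bN ln by (intro mult_mono) auto
  then have "4 * 1 \<le> N * (b * N * ln (1 / b))"
    using N by (intro mult_mono) auto
  moreover have "(N * c)\<^sup>2 = 9 * (N * (b * N * ln (1 / b)))"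
    unfolding power_mult_distrib c2 by (simp add: power2_eq_square algebra_simps)
  ultimately have "36 \<le> (N * c)\<^sup>2"
    by linarith
  then have "6\<^sup>2 \<le> (N * c)\<^sup>2"
    by simp
  moreover have "0 \<le> N * c"
    using assms(1,4) bl by simp
  ultimately show "6 \<le> N * c"
    by (rule power2_le_imp_le)
qed

lemma potential_choice_bounds:
  fixes k l :: nat and b c :: real
  assumes "l < k" "1 / real (k - l) \<le> b" "b \<le> 1 / 4" "c = 3 * sqrt (b * ln (1 / b))" "c < 1"
  defines "d \<equiv> c * (real k - 1)"
  defines "s \<equiv> real (k - l) / real k * (d / (2 * real k))"
  shows "1 < k" "0 \<le> d" "d \<le> real k" "d / (real k - 1) = c"
    and "real k / (real k - 1) \<le> 1 + s"
    and "exp (- (real (k - l) * d\<^sup>2 / (4 * real k ^ 2))) \<le> b"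
proof -
  define K N where "K = real k" and "N = real (k - l)"
  have "0 < N"
    using assms(1) by (simp add: N_def)
  note bounds = bc_parameter_bounds[OF this assms(2,3)[folded N_def] assms(4)]
  have "N \<le> K"
    by (simp add: K_def N_def)
  then have K: "4 \<le> K"
    using bounds(2) by linarith
  then show "1 < k"
    by (simp add: K_def)
  show "0 \<le> d"
    using bounds(3) K by (simp add: d_def K_def)
  have "d \<le> 1 * (K - 1)"
    using assms(5) K unfolding d_def K_def by (intro mult_right_mono) auto
  then show "d \<le> real k"
    by (simp add: K_def)
  show "d / (real k - 1) = c"
    using K by (simp add: d_def K_def)
  have "2 / 3 \<le> (K - 1) / K"
    using K by (simp add: field_simps)
  from power_mono[OF this, of 2] have w: "4 / 9 \<le> ((K - 1) / K)\<^sup>2"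
    by (simp add: power2_eq_square)
  have "s * (K - 1) = N * c / 2 * ((K - 1) / K)\<^sup>2"
    using K by (simp add: s_def d_def K_def[symmetric] N_def[symmetric] power2_eq_square field_simps)
  also have "\<dots> \<ge> 6 / 2 * (4 / 9)"
    using bounds(5) w by (intro mult_mono) auto
  finally have "1 / (K - 1) \<le> s"
    using K by (simp add: field_simps)
  then show "real k / (real k - 1) \<le> 1 + s"
    using K by (simp add: K_def[symmetric] field_simps)
  have "N * c\<^sup>2 / 4 * (4 / 9) \<le> N * c\<^sup>2 / 4 * ((K - 1) / K)\<^sup>2"
    using w \<open>0 < N\<close> by (intro mult_left_mono) simp_all
  also have "\<dots> = N * d\<^sup>2 / (4 * K ^ 2)"
    using K by (simp add: d_def K_def[symmetric] power2_eq_square field_simps)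
  finally have "ln (1 / b) \<le> N * d\<^sup>2 / (4 * K ^ 2)"
    using bounds(4) by simp
  then have "exp (- (N * d\<^sup>2 / (4 * K ^ 2))) \<le> exp (- ln (1 / b))"
    by simp
  also have "\<dots> = b"
    using bounds(1) by (simp add: ln_div)
  finally show "exp (- (real (k - l) * d\<^sup>2 / (4 * real k ^ 2))) \<le> b"
    by (simp add: K_def N_def)
qed

lemma power_potential_bases:
  fixes p t :: real
  assumes "0 \<le> p" "p \<le> 1" "0 \<le> t"
  defines "s \<equiv> (1 - p) * t"
  shows "0 \<le> s" "0 < (1 + s) / (1 + t)" "(1 + s) / (1 + t) \<le> 1"
    and "p * ((1 + s) / (1 + t)) + (1 - p) * (1 + s) = (1 + s) * ((1 + s) / (1 + t))"
proof -
  show s: "0 \<le> s"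
    using assms by (simp add: s_def)
  have "s \<le> t"
    using assms by (simp add: s_def mult_left_le_one_le)
  with s assms(3) show "0 < (1 + s) / (1 + t)" "(1 + s) / (1 + t) \<le> 1"
    by simp_all
  have "1 + s = (1 + s) / (1 + t) * (1 + t)"
    using assms(3) by simp
  then have "p * ((1 + s) / (1 + t)) + (1 - p) * (1 + s)
      = (1 + s) / (1 + t) * (p + (1 - p) * (1 + t))"
    by (metis (no_types, lifting) distrib_left mult.assoc mult.commute)
  also have "p + (1 - p) * (1 + t) = 1 + s"
    by (simp add: s_def algebra_simps)
  finally show "p * ((1 + s) / (1 + t)) + (1 - p) * (1 + s) = (1 + s) * ((1 + s) / (1 + t))"
    by (simp add: mult.commute)
qed

lemma gap_factor_full_budget_le:
  fixes b c :: real
  assumes lk: "l < k" and b: "1 / real (k - l) \<le> b" "b \<le> 1 / 4"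
    and c: "c = 3 * sqrt (b * ln (1 / b))" "c < 1"
  shows "gap_factor k l l (k - l) \<le> b + exp (-1 + c)"
proof -
  define d t \<rho> where "d = c * (real k - 1)" and "t = d / (2 * real k)"
    and "\<rho> = real k / (real k - 1)"
  define s x y where "s = real (k - l) / real k * t" and "x = 1 + s" and "y = (1 + s) / (1 + t)"
  note choice = potential_choice_bounds[OF lk b c, folded d_def, folded t_def, folded s_def]
  have "real (k - l) / real k = 1 - real l / real k"
    using lk by (simp add: of_nat_diff field_simps)
  moreover have "0 \<le> real l / real k" "real l / real k \<le> 1" "0 \<le> t"
    using lk choice(2) by (simp_all add: t_def)
  ultimately have s: "0 \<le> s" and y: "0 < y" "y \<le> 1"
    and xy: "real l / real k * y + (1 - real l / real k) * x = x * y"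
    using power_potential_bases[of "real l / real k" t] by (simp_all add: s_def x_def y_def)
  have "gap_factor k l l (k - l)
      \<le> (1 - 1 / real k) ^ (l + (k - l)) * (\<rho> powr d + (\<rho> / x) powr d * x ^ l * y ^ (k - l))"
    using gap_factor_le_power_potential[OF lk choice(1,2) _ y xy] choice(5)
    unfolding \<rho>_def x_def by simp
  also have "\<dots> = (1 - 1 / real k) ^ k * \<rho> powr d * (1 + x ^ l * y ^ (k - l) / x powr d)"
    using lk by (simp add: powr_divide algebra_simps)
  also have "\<dots> \<le> exp (-1 + c) * (1 + b)"
  proof (rule mult_mono)
    show "(1 - 1 / real k) ^ k * \<rho> powr d \<le> exp (-1 + c)"
      using one_minus_inverse_power_mult_powr_le[OF choice(1,2)] choice(4) by (simp add: \<rho>_def)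
    have "x ^ l * y ^ (k - l) / x powr d \<le> exp (- (real (k - l) * d\<^sup>2 / (4 * real k ^ 2)))"
      using potential_tail_le[of l k d] lk choice(2,3) unfolding x_def y_def s_def t_def by simp
    with choice(6) show "1 + x ^ l * y ^ (k - l) / x powr d \<le> 1 + b"
      by simp
  qed (use s y in \<open>simp_all add: x_def\<close>)
  also have "\<dots> \<le> b + exp (-1 + c)"
  proof -
    have "0 \<le> b"
      using b(1) by (smt (verit) of_nat_0_le_iff divide_nonneg_nonneg)
    then have "exp (-1 + c) * b \<le> b"
      using c(2) by (intro mult_left_le_one_le) simp_all
    then show ?thesis
      by (simp add: algebra_simps)
  qed
  finally show ?thesis .
qed

lemma four_le_of_guarantee_pos:
  fixes M :: nat and b c :: real
  assumes "1 \<le> M" "b = 1 / real M" "c = 3 * sqrt (b * ln (1 / b))" "0 < 1 - b - exp (-1 + c)"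
  shows "4 \<le> M"
proof (rule ccontr)
  assume "\<not> 4 \<le> M"
  then consider "M = 1" | "2 \<le> M" "M \<le> 3"
    using assms(1) by linarith
  then show False
  proof cases
    case 1
    then show False
      using assms(2,4) by simp
  next
    case 2
    have b: "1 / 3 \<le> b" "2 \<le> 1 / b"
      using 2 assms(2) by (simp_all add: divide_left_mono)
    have "0 < 1 / b"
      using b(2) by linarith
    with b(2) have "ln 2 \<le> ln (1 / b)"
      by simp
    then have "2 / 3 \<le> ln (1 / b)"
      using ln2_ge_two_thirds by linarith
    then have "1 / 3 * (2 / 3) \<le> b * ln (1 / b)"
      using b(1) by (intro mult_mono) auto
    then have "(1 / 3)\<^sup>2 \<le> b * ln (1 / b)"
      by (simp add: power2_eq_square)
    then have "1 / 3 \<le> sqrt (b * ln (1 / b))"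
      by (rule real_le_rsqrt)
    then have "1 \<le> c"
      using assms(3) by simp
    then have "1 \<le> exp (-1 + c)"
      by simp
    moreover have "0 < b"
      using b(1) by simp
    ultimately show False
      using assms(4) by linarith
  qed
qed

lemma max_inverse_eq_inverse_min:
  fixes p q :: nat
  assumes "0 < p" "0 < q"
  shows "max (1 / real p) (1 / real q) = 1 / real (min p q)"
proof (cases "p \<le> q")
  case True
  then have "1 / real q \<le> 1 / real p"
    using assms by (simp add: divide_left_mono)
  with True show ?thesis
    by (simp add: max_absorb1)
next
  case False
  then have "1 / real p \<le> 1 / real q"
    using assms by (simp add: divide_left_mono)
  with False show ?thesis
    by (simp add: max_absorb2)
qed

lemma guarantee_le_one_minus_gap_factor:
  fixes b c :: real
  assumes "1 \<le> l" "l < k" and b: "b = max (1 / real (k - l)) (1 / real l)"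
    and c: "c = 3 * sqrt (b * ln (1 / b))"
  shows "1 - b - exp (-1 + c) \<le> 1 - gap_factor k l l (k - l)"
proof (cases "0 < 1 - b - exp (-1 + c)")
  case True
  define M where "M = min (k - l) l"
  have bM: "b = 1 / real M"
    unfolding b M_def by (rule max_inverse_eq_inverse_min) (use assms(1,2) in simp_all)
  have "4 \<le> M"
    using four_le_of_guarantee_pos[OF _ bM c True] assms(1,2) by (simp add: M_def)
  then have "b \<le> 1 / 4"
    unfolding bM using divide_left_mono[of 4 "real M" 1] by simp
  moreover have "0 \<le> b" "1 / real (k - l) \<le> b"
    unfolding b by (simp_all add: le_max_iff_disj)
  moreover from this True have "exp (-1 + c) < 1"
    by linarith
  then have "c < 1"
    by simp
  ultimately have "gap_factor k l l (k - l) \<le> b + exp (-1 + c)"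
    using gap_factor_full_budget_le[OF assms(2) _ _ c] by simp
  then show ?thesis
    by linarith
next
  case False
  then show ?thesis
    using gap_factor_bounds[OF assms(2), of l "k - l"] by linarith
qed

section \<open>The randomized meta-greedy run\<close>

definition mg_value :: "nat \<Rightarrow> (nat \<Rightarrow> 'a set \<Rightarrow> real) \<Rightarrow> 'a mg_state \<Rightarrow> real" where
  "mg_value m f = (\<lambda>(T, S, a, b). \<Sum>i=1..m. f i (T \<union> S i))"

definition tr_gain :: "nat \<Rightarrow> (nat \<Rightarrow> 'a set \<Rightarrow> real) \<Rightarrow> ('a mg_state \<Rightarrow> 'a) \<Rightarrow> 'a mg_state \<Rightarrow> real"
  where "tr_gain m f etr = (\<lambda>(T, S, a, b). \<Sum>i=1..m. mg_gain (f i) (T \<union> S i) (etr (T, S, a, b)))"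

definition S_gain :: "nat \<Rightarrow> (nat \<Rightarrow> 'a set \<Rightarrow> real) \<Rightarrow> (nat \<Rightarrow> 'a mg_state \<Rightarrow> 'a) \<Rightarrow> 'a mg_state \<Rightarrow> real"
  where "S_gain m f ei = (\<lambda>(T, S, a, b). \<Sum>i=1..m. mg_gain (f i) (T \<union> S i) (ei i (T, S, a, b)))"

definition mg_invariant :: "'a set \<Rightarrow> nat \<Rightarrow> nat \<Rightarrow> nat \<Rightarrow> 'a mg_state \<Rightarrow> bool" where
  "mg_invariant V m k l = (\<lambda>(T, S, a, b). T \<subseteq> V \<and> card T \<le> a \<and> a \<le> l \<and> b \<le> k - l
     \<and> (\<forall>i\<in>{1..m}. S i \<subseteq> V \<and> card (S i) \<le> b))"

lemma mg_value_add_tr: "mg_value m f (add_tr etr st) = mg_value m f st + tr_gain m f etr st"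
  by (cases st) (simp add: mg_value_def tr_gain_def add_tr_def mg_gain_def sum_subtractf Un_ac)

lemma mg_value_add_S: "mg_value m f (add_S ei st) = mg_value m f st + S_gain m f ei st"
  by (cases st) (simp add: mg_value_def S_gain_def add_S_def mg_gain_def sum_subtractf Un_ac)

lemma finite_set_pmf_mg_run: "finite (set_pmf (mg_run k l etr ei n st))"
proof (induction n arbitrary: st)
  case 0
  then show ?case by simp
next
  case (Suc n)
  have "finite (set_pmf (bernoulli_pmf p))" for p
    by (rule finite_subset[of _ UNIV]) auto
  with Suc.IH show ?case
    by (cases st) (auto simp: set_bind_pmf)
qed

lemma expectation_mg_run_Suc_random:
  fixes F :: "'a mg_state \<Rightarrow> real"
  assumes "a < l" "b < k - l"
  shows "measure_pmf.expectation (mg_run k l etr ei (Suc n) (T, S, a, b)) F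
    = real l / real k * measure_pmf.expectation (mg_run k l etr ei n (add_tr etr (T, S, a, b))) F
      + (1 - real l / real k) * measure_pmf.expectation (mg_run k l etr ei n (add_S ei (T, S, a, b))) F"
proof -
  have "real l / real k \<le> 1"
    using assms by simp
  then show ?thesis
    using assms
    by (simp, subst pmf_expectation_bind[of UNIV]) (auto simp: finite_set_pmf_mg_run UNIV_bool)
qed

locale meta_greedy_setting =
  fixes V :: "'a set" and m k l :: nat and f :: "nat \<Rightarrow> 'a set \<Rightarrow> real"
    and etr :: "'a mg_state \<Rightarrow> 'a" and ei :: "nat \<Rightarrow> 'a mg_state \<Rightarrow> 'a"
  assumes finite_V: "finite V"
    and l_less_k: "l < k"
    and mono: "\<And>i. i \<in> {1..m} \<Longrightarrow> monotone_sf V (f i)"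
    and submod: "\<And>i. i \<in> {1..m} \<Longrightarrow> submodular_sf V (f i)"
    and etr_greedy: "\<And>T S a b. etr (T, S, a, b) \<in> V \<and>
         (\<forall>e\<in>V. (\<Sum>i=1..m. mg_gain (f i) (T \<union> S i) e)
                 \<le> (\<Sum>i=1..m. mg_gain (f i) (T \<union> S i) (etr (T, S, a, b))))"
    and ei_greedy: "\<And>i T S a b. i \<in> {1..m} \<Longrightarrow> ei i (T, S, a, b) \<in> V \<and>
         (\<forall>e\<in>V. mg_gain (f i) (T \<union> S i) e \<le> mg_gain (f i) (T \<union> S i) (ei i (T, S, a, b)))"
begin

lemma finite_budget_sets: "finite {S. S \<subseteq> V \<and> card S \<le> j}"
  by (rule finite_subset[of _ "Pow V"]) (use finite_V in auto)

lemma mg_invariant_add_tr: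
  assumes "mg_invariant V m k l (T, S, a, b)" "a < l"
  shows "mg_invariant V m k l (add_tr etr (T, S, a, b))"
proof -
  have "finite T"
    using assms(1) finite_V finite_subset by (auto simp: mg_invariant_def)
  then have "card (insert (etr (T, S, a, b)) T) \<le> Suc (card T)"
    by (simp add: card_insert_if)
  then show ?thesis
    using assms etr_greedy[of T S a b] by (auto simp: mg_invariant_def add_tr_def)
qed

lemma mg_invariant_add_S:
  assumes "mg_invariant V m k l (T, S, a, b)" "b < k - l"
  shows "mg_invariant V m k l (add_S ei (T, S, a, b))"
proof -
  have "card (insert (ei i (T, S, a, b)) (S i)) \<le> Suc (card (S i))" if "i \<in> {1..m}" for i
  proof -
    have "S i \<subseteq> V"
      using that assms(1) by (simp add: mg_invariant_def)
    then have "finite (S i)"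
      using finite_V finite_subset by blast
    then show ?thesis
      by (simp add: card_insert_if)
  qed
  then show ?thesis
    using assms ei_greedy by (fastforce simp: mg_invariant_def add_S_def)
qed

lemma mg_value_le_OPT:
  assumes "mg_invariant V m k l (T, S, a, b)"
  shows "mg_value m f (T, S, a, b) \<le> OPT V m f k l"
proof -
  let ?C = "{S. S \<subseteq> V \<and> card S \<le> k - l}"
  let ?g = "\<lambda>T. \<Sum>i=1..m. Max ((\<lambda>S. f i (T \<union> S)) ` ?C)"
  have "(\<Sum>i=1..m. f i (T \<union> S i)) \<le> ?g T"
  proof (rule sum_mono)
    fix i assume "i \<in> {1..m}"
    then have "S i \<in> ?C"
      using assms by (force simp: mg_invariant_def)
    then show "f i (T \<union> S i) \<le> Max ((\<lambda>S. f i (T \<union> S)) ` ?C)"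
      by (intro Max_ge finite_imageI finite_budget_sets imageI)
  qed
  also have "?g T \<le> OPT V m f k l"
    unfolding OPT_def
    using assms by (intro Max_ge finite_imageI finite_budget_sets imageI) (auto simp: mg_invariant_def)
  finally show ?thesis
    by (simp add: mg_value_def)
qed

lemma OPT_attained:
  obtains T0 S0 where "T0 \<subseteq> V" "card T0 \<le> l" "\<And>i. S0 i \<subseteq> V" "\<And>i. card (S0 i) \<le> k - l"
    "OPT V m f k l = (\<Sum>i=1..m. f i (T0 \<union> S0 i))"
proof -
  let ?C = "{S. S \<subseteq> V \<and> card S \<le> k - l}"
  let ?g = "\<lambda>T. \<Sum>i=1..m. Max ((\<lambda>S. f i (T \<union> S)) ` ?C)"
  have "OPT V m f k l \<in> ?g ` {T. T \<subseteq> V \<and> card T \<le> l}"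
    unfolding OPT_def by (rule Max_in) (use finite_budget_sets in auto)
  then obtain T0 where T0: "T0 \<subseteq> V" "card T0 \<le> l" "OPT V m f k l = ?g T0"
    by blast
  have "\<forall>i. \<exists>S. S \<in> ?C \<and> Max ((\<lambda>S. f i (T0 \<union> S)) ` ?C) = f i (T0 \<union> S)"
  proof
    fix i
    have "Max ((\<lambda>S. f i (T0 \<union> S)) ` ?C) \<in> (\<lambda>S. f i (T0 \<union> S)) ` ?C"
      by (rule Max_in) (use finite_budget_sets in auto)
    then show "\<exists>S. S \<in> ?C \<and> Max ((\<lambda>S. f i (T0 \<union> S)) ` ?C) = f i (T0 \<union> S)"
      by blast
  qed
  then have "\<exists>S0. \<forall>i. S0 i \<in> ?C \<and> Max ((\<lambda>S. f i (T0 \<union> S)) ` ?C) = f i (T0 \<union> S0 i)"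
    by (rule choice)
  then obtain S0 where S0: "\<And>i. S0 i \<in> ?C" "\<And>i. Max ((\<lambda>S. f i (T0 \<union> S)) ` ?C) = f i (T0 \<union> S0 i)"
    by blast
  show ?thesis
  proof (rule that[of T0 S0])
    show "S0 i \<subseteq> V" "card (S0 i) \<le> k - l" for i
      using S0(1)[of i] by simp_all
    show "OPT V m f k l = (\<Sum>i=1..m. f i (T0 \<union> S0 i))"
      using T0(3) S0(2) by simp
  qed (use T0 in simp_all)
qed

lemma tr_gain_nonneg:
  assumes "mg_invariant V m k l (T, S, a, b)"
  shows "0 \<le> tr_gain m f etr (T, S, a, b)"
  unfolding tr_gain_def using assms etr_greedy[of T S a b]
  by (auto simp: mg_invariant_def intro!: sum_nonneg mg_gain_nonneg[OF mono])

lemma tr_gain_le_S_gain: "tr_gain m f etr (T, S, a, b) \<le> S_gain m f ei (T, S, a, b)"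
  unfolding tr_gain_def S_gain_def using etr_greedy[of T S a b] ei_greedy
  by (auto intro!: sum_mono)

lemma OPT_gap_le_gains:
  assumes inv: "mg_invariant V m k l (T, S, a, b)"
  shows "OPT V m f k l - mg_value m f (T, S, a, b)
    \<le> real l * tr_gain m f etr (T, S, a, b) + real (k - l) * S_gain m f ei (T, S, a, b)"
proof -
  obtain T0 S0 where T0: "T0 \<subseteq> V" "card T0 \<le> l" and S0: "\<And>i. S0 i \<subseteq> V" "\<And>i. card (S0 i) \<le> k - l"
    and opt: "OPT V m f k l = (\<Sum>i=1..m. f i (T0 \<union> S0 i))"
    by (rule OPT_attained) blast
  have X: "T \<union> S i \<subseteq> V" if "i \<in> {1..m}" for i
    using inv that by (force simp: mg_invariant_def)
  let ?g = "\<lambda>i e. mg_gain (f i) (T \<union> S i) e"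
  have "OPT V m f k l \<le> (\<Sum>i=1..m. f i (T \<union> S i) + (\<Sum>e\<in>T0. ?g i e) + (\<Sum>e\<in>S0 i. ?g i e))"
    unfolding opt
    by (intro sum_mono monotone_submodular_union_le[OF mono submod finite_V X T0(1) S0(1)])
  also have "\<dots> = mg_value m f (T, S, a, b) + (\<Sum>i=1..m. \<Sum>e\<in>T0. ?g i e) + (\<Sum>i=1..m. \<Sum>e\<in>S0 i. ?g i e)"
    by (simp add: mg_value_def sum.distrib)
  finally have OPT_le: "OPT V m f k l \<le> \<dots>" .
  have "(\<Sum>i=1..m. \<Sum>e\<in>T0. ?g i e) = (\<Sum>e\<in>T0. \<Sum>i=1..m. ?g i e)"
    by (rule sum.swap)
  also have "\<dots> \<le> (\<Sum>e\<in>T0. tr_gain m f etr (T, S, a, b))"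
    using etr_greedy[of T S a b] T0(1) by (intro sum_mono) (auto simp: tr_gain_def)
  also have "\<dots> \<le> real l * tr_gain m f etr (T, S, a, b)"
    using T0(2) tr_gain_nonneg[OF inv] by (simp add: mult_right_mono)
  finally have tr_part: "(\<Sum>i=1..m. \<Sum>e\<in>T0. ?g i e) \<le> real l * tr_gain m f etr (T, S, a, b)" .
  have "(\<Sum>e\<in>S0 i. ?g i e) \<le> real (k - l) * ?g i (ei i (T, S, a, b))" if i: "i \<in> {1..m}" for i
  proof -
    have "(\<Sum>e\<in>S0 i. ?g i e) \<le> (\<Sum>e\<in>S0 i. ?g i (ei i (T, S, a, b)))"
      using ei_greedy[OF i, of T S a b] S0(1)[of i] by (intro sum_mono) auto
    also have "\<dots> \<le> real (k - l) * ?g i (ei i (T, S, a, b))"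
      using S0(2)[of i] mg_gain_nonneg[OF mono[OF i] X[OF i]] ei_greedy[OF i, of T S a b]
      by (simp add: mult_right_mono)
    finally show ?thesis .
  qed
  then have "(\<Sum>i=1..m. \<Sum>e\<in>S0 i. ?g i e) \<le> (\<Sum>i=1..m. real (k - l) * ?g i (ei i (T, S, a, b)))"
    by (rule sum_mono)
  also have "\<dots> = real (k - l) * S_gain m f ei (T, S, a, b)"
    by (simp add: S_gain_def sum_distrib_left)
  finally have S_part: "(\<Sum>i=1..m. \<Sum>e\<in>S0 i. ?g i e) \<le> real (k - l) * S_gain m f ei (T, S, a, b)" .
  from OPT_le tr_part S_part show ?thesis
    by linarith
qed

lemma gap_le_k_mult_S_gain:
  assumes inv: "mg_invariant V m k l (T, S, a, b)"
  shows "OPT V m f k l - mg_value m f (T, S, a, b) \<le> real k * S_gain m f ei (T, S, a, b)"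
proof -
  have "real l * tr_gain m f etr (T, S, a, b) \<le> real l * S_gain m f ei (T, S, a, b)"
    using tr_gain_le_S_gain by (rule mult_left_mono) simp
  moreover have "real l * S_gain m f ei (T, S, a, b) + real (k - l) * S_gain m f ei (T, S, a, b)
      = real k * S_gain m f ei (T, S, a, b)"
    using l_less_k by (simp add: of_nat_diff algebra_simps)
  ultimately show ?thesis
    using OPT_gap_le_gains[OF inv] by linarith
qed

lemma gap_factor_step_random:
  fixes E1 E2 :: real
  assumes inv: "mg_invariant V m k l (T, S, a, b)" and ab: "a < l" "b < k - l"
    and IH1: "OPT V m f k l - gap_factor k l (l - Suc a) (k - l - b)
        * (OPT V m f k l - mg_value m f (add_tr etr (T, S, a, b))) \<le> E1"
    and IH2: "OPT V m f k l - gap_factor k l (l - a) (k - l - Suc b)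
        * (OPT V m f k l - mg_value m f (add_S ei (T, S, a, b))) \<le> E2"
  shows "OPT V m f k l - gap_factor k l (l - a) (k - l - b) * (OPT V m f k l - mg_value m f (T, S, a, b))
    \<le> real l / real k * E1 + (1 - real l / real k) * E2"
proof -
  define p D x y A1 A2 where "p = real l / real k"
    and "D = OPT V m f k l - mg_value m f (T, S, a, b)"
    and "x = tr_gain m f etr (T, S, a, b)" and "y = S_gain m f ei (T, S, a, b)"
    and "A1 = gap_factor k l (l - Suc a) (k - l - b)" and "A2 = gap_factor k l (l - a) (k - l - Suc b)"
  have p: "0 \<le> p" "p \<le> 1"
    using l_less_k by (simp_all add: p_def)
  have A: "0 \<le> A1" "0 \<le> A2"
    using gap_factor_bounds[OF l_less_k] by (simp_all add: A1_def A2_def)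
  have D: "0 \<le> D"
    using mg_value_le_OPT[OF inv] by (simp add: D_def)
  have "1 / real k * D \<le> 1 / real k * (real l * x + real (k - l) * y)"
    using OPT_gap_le_gains[OF inv] by (simp add: D_def x_def y_def divide_right_mono)
  also have "\<dots> = p * x + (1 - p) * y"
    using l_less_k by (simp add: p_def of_nat_diff field_simps)
  finally have Dk: "1 / real k * D \<le> p * x + (1 - p) * y" .
  have "l - a = Suc (l - Suc a)" "k - l - b = Suc (k - l - Suc b)"
    using ab by simp_all
  then have G: "gap_factor k l (l - a) (k - l - b)
      = max ((1 - 1 / real k) * (p * A1 + (1 - p) * A2)) (p * A1 + (1 - p - 1 / real k) * A2)"
    by (simp add: p_def A1_def A2_def)
  have x: "0 \<le> x" "x \<le> y"
    using tr_gain_nonneg[OF inv] tr_gain_le_S_gain by (simp_all add: x_def y_def)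
  have "p * A1 * (D - x) + (1 - p) * A2 * (D - y) \<le> gap_factor k l (l - a) (k - l - b) * D"
    unfolding G using gap_step_le[OF p A D x Dk] .
  moreover have "OPT V m f k l - A1 * (D - x) \<le> E1" "OPT V m f k l - A2 * (D - y) \<le> E2"
    using IH1 IH2 by (simp_all add: A1_def A2_def D_def x_def y_def mg_value_add_tr mg_value_add_S diff_diff_eq)
  then have "p * (OPT V m f k l - A1 * (D - x)) + (1 - p) * (OPT V m f k l - A2 * (D - y))
      \<le> p * E1 + (1 - p) * E2"
    using p by (intro add_mono mult_left_mono) simp_all
  moreover have "p * (OPT V m f k l - A1 * (D - x)) + (1 - p) * (OPT V m f k l - A2 * (D - y))
      = OPT V m f k l - (p * A1 * (D - x) + (1 - p) * A2 * (D - y))"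
    by (simp add: algebra_simps)
  ultimately show ?thesis
    unfolding p_def[symmetric] D_def[symmetric] by linarith
qed

lemma gap_factor_step_S:
  fixes E :: real
  assumes inv: "mg_invariant V m k l (T, S, a, b)" and "b < k - l"
    and IH: "OPT V m f k l - gap_factor k l 0 (k - l - Suc b)
        * (OPT V m f k l - mg_value m f (add_S ei (T, S, a, b))) \<le> E"
  shows "OPT V m f k l - gap_factor k l 0 (k - l - b) * (OPT V m f k l - mg_value m f (T, S, a, b)) \<le> E"
proof -
  define r v D where "r = 1 - 1 / real k" and "v = k - l - Suc b"
    and "D = OPT V m f k l - mg_value m f (T, S, a, b)"
  have "D \<le> real k * S_gain m f ei (T, S, a, b)"
    using gap_le_k_mult_S_gain[OF inv] by (simp add: D_def)
  then have "D - S_gain m f ei (T, S, a, b) \<le> r * D"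
    using l_less_k by (simp add: r_def field_simps)
  then have "r ^ v * (D - S_gain m f ei (T, S, a, b)) \<le> r ^ v * (r * D)"
    using l_less_k by (intro mult_left_mono) (simp_all add: r_def)
  moreover have "k - l - b = Suc v"
    using assms(2) by (simp add: v_def)
  then have G: "gap_factor k l 0 (k - l - b) = r * r ^ v" "gap_factor k l 0 (k - l - Suc b) = r ^ v"
    by (simp_all add: gap_factor_zero_left r_def v_def)
  ultimately have "OPT V m f k l - gap_factor k l 0 (k - l - b) * D
      \<le> OPT V m f k l - gap_factor k l 0 (k - l - Suc b) * (D - S_gain m f ei (T, S, a, b))"
    by (simp add: mult.assoc mult.left_commute)
  also have "\<dots> \<le> E"
    using IH by (simp add: mg_value_add_S D_def diff_diff_eq)
  finally show ?thesis
    unfolding D_def .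
qed

lemma expectation_mg_run_ge:
  assumes "mg_invariant V m k l (T, S, a, b)" "n = (l - a) + (k - l - b)"
  shows "OPT V m f k l - gap_factor k l (l - a) (k - l - b) * (OPT V m f k l - mg_value m f (T, S, a, b))
    \<le> measure_pmf.expectation (mg_run k l etr ei n (T, S, a, b)) (mg_value m f)"
  using assms
proof (induction n arbitrary: T S a b)
  case 0
  then show ?case by simp
next
  case (Suc n)
  note inv = Suc.prems(1)
  have IH_tr: "OPT V m f k l - gap_factor k l (l - Suc a) (k - l - b)
        * (OPT V m f k l - mg_value m f (add_tr etr (T, S, a, b)))
      \<le> measure_pmf.expectation (mg_run k l etr ei n (add_tr etr (T, S, a, b))) (mg_value m f)"
    if "a < l"
  proof -
    have "n = (l - Suc a) + (k - l - b)"
      using Suc.prems(2) that by simp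
    then show ?thesis
      using Suc.IH[of "insert (etr (T, S, a, b)) T" S "Suc a" b] mg_invariant_add_tr[OF inv that]
      by (simp add: add_tr_def)
  qed
  have IH_S: "OPT V m f k l - gap_factor k l (l - a) (k - l - Suc b)
        * (OPT V m f k l - mg_value m f (add_S ei (T, S, a, b)))
      \<le> measure_pmf.expectation (mg_run k l etr ei n (add_S ei (T, S, a, b))) (mg_value m f)"
    if "b < k - l"
  proof -
    have "n = (l - a) + (k - l - Suc b)"
      using Suc.prems(2) that by simp
    then show ?thesis
      using Suc.IH[of T "\<lambda>i. insert (ei i (T, S, a, b)) (S i)" a "Suc b"] mg_invariant_add_S[OF inv that]
      by (simp add: add_S_def)
  qed
  have "a \<le> l" "b \<le> k - l"
    using inv by (simp_all add: mg_invariant_def)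
  then consider (random) "a < l" "b < k - l" | (tr_only) "a < l" "b = k - l" | (S_only) "a = l" "b < k - l"
    using Suc.prems(2) by linarith
  then show ?case
  proof cases
    case random
    then show ?thesis
      unfolding expectation_mg_run_Suc_random[OF random]
      by (intro gap_factor_step_random[OF inv random] IH_tr IH_S)
  next
    case tr_only
    then show ?thesis
      using IH_tr tr_gain_nonneg[OF inv] by (simp add: mg_value_add_tr)
  next
    case S_only
    then show ?thesis
      using gap_factor_step_S[OF inv S_only(2)] IH_S[OF S_only(2)] by simp
  qed
qed

lemma expectation_meta_greedy_ge:
  "OPT V m f k l - gap_factor k l l (k - l) * (OPT V m f k l - mg_value m f ({}, \<lambda>i. {}, 0, 0))
    \<le> measure_pmf.expectation (meta_greedy k l etr ei) (mg_value m f)"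
  using expectation_mg_run_ge[of "{}" "\<lambda>i. {}" 0 0 k] l_less_k
  by (simp add: meta_greedy_def mg_invariant_def)

end

theorem theorem2:
  fixes V :: "'a set" and m k l :: nat and f :: "nat \<Rightarrow> 'a set \<Rightarrow> real"
    and etr :: "'a mg_state \<Rightarrow> 'a" and ei :: "nat \<Rightarrow> 'a mg_state \<Rightarrow> 'a"
  assumes "finite V"
    and "1 \<le> l" "l < k" "k \<le> card V"
    and nonneg: "\<And>i A. i \<in> {1..m} \<Longrightarrow> A \<subseteq> V \<Longrightarrow> f i A \<ge> 0"
    and mono: "\<And>i. i \<in> {1..m} \<Longrightarrow> monotone_sf V (f i)"
    and submod: "\<And>i. i \<in> {1..m} \<Longrightarrow> submodular_sf V (f i)"
    and etr_greedy: "\<And>T S a b. etr (T, S, a, b) \<in> V \<and>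
         (\<forall>e\<in>V. (\<Sum>i=1..m. mg_gain (f i) (T \<union> S i) e)
                 \<le> (\<Sum>i=1..m. mg_gain (f i) (T \<union> S i) (etr (T, S, a, b))))"
    and ei_greedy: "\<And>i T S a b. i \<in> {1..m} \<Longrightarrow> ei i (T, S, a, b) \<in> V \<and>
         (\<forall>e\<in>V. mg_gain (f i) (T \<union> S i) e \<le> mg_gain (f i) (T \<union> S i) (ei i (T, S, a, b)))"
  shows "measure_pmf.expectation (meta_greedy k l etr ei)
            (\<lambda>(T, S, a, b). \<Sum>i=1..m. f i (T \<union> S i))
         \<ge> (let b = max (1 / real (k - l)) (1 / real l);
                c = 3 * sqrt (b * ln (1 / b))
            in (1 - b - exp (-1 + c)) * OPT V m f k l)"
proof -
  interpret meta_greedy_setting V m k l f etr ei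
    using assms by unfold_locales auto
  define b c where "b = max (1 / real (k - l)) (1 / real l)" and "c = 3 * sqrt (b * ln (1 / b))"
  define G where "G = gap_factor k l l (k - l)"
  have G: "0 \<le> G"
    using gap_factor_bounds[OF l_less_k] by (simp add: G_def)
  have F0: "0 \<le> mg_value m f ({}, \<lambda>i. {}, 0, 0)"
    by (auto simp: mg_value_def intro!: sum_nonneg nonneg)
  have OPT: "0 \<le> OPT V m f k l"
    using F0 mg_value_le_OPT[of "{}" "\<lambda>i. {}" 0 0] by (simp add: mg_invariant_def)
  have "(1 - G) * OPT V m f k l \<le> measure_pmf.expectation (meta_greedy k l etr ei) (mg_value m f)"
    using expectation_meta_greedy_ge mult_left_mono[OF F0 G] by (simp add: G_def algebra_simps)
  moreover have "(1 - b - exp (-1 + c)) * OPT V m f k l \<le> (1 - G) * OPT V m f k l"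
    using guarantee_le_one_minus_gap_factor[OF assms(2,3) b_def c_def] OPT
    unfolding G_def by (rule mult_right_mono)
  ultimately show ?thesis
    unfolding Let_def b_def[symmetric] c_def[symmetric] mg_value_def[symmetric] by linarith
qed

end
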